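(* Let $P$ be a finite lattice and let $r:\mathcal{L}_P\to\mathbb{R}_{\ge0}$ satisfy (R.1) $r(f)\le r(g)$ whenever $f\le g$, and (R.2) $r(f+g)=r(f)+r(g)-r(f\cdot g)$ whenever $(f,g)$ is a modular pair in $\mathcal{L}_P$. Then there exists an additive map $\mu:2^P\to\mathbb{R}_{\ge0}$ (i.e. $\mu(S\cup T)=\mu(S)+\mu(T)$ for disjoint $S,T$) such that $r(f)=\mu(P\setminus\Phi f)+r(0)$ for every $f\in\mathcal{L}_P$.
   Context: $P$ is a finite lattice with greatest element $\hat p$. $\mathcal{L}_P$ is the set of maps $f:P\to P$ satisfying (A.1) $a\le f(a)$; (A.2) $a\le b\Rightarrow f(a)\le f(b)$; (A.3) $f(f(a))=f(a)$, ordered pointwise; it is a lattice with join $+$, meet $\cdot$, least element $0$ (identity map). $\Phi f=\{a:f(a)=a\}$. A pair $(f,g)$ in a lattice is a modular pair if $h+(f\cdot g)=(h+f)\cdot g$ for every $h\le g$. *)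

theory Defs
  imports Complex_Main
begin

definition closure_op :: "('a::order \<Rightarrow> 'a) \<Rightarrow> bool" where
  "closure_op f \<longleftrightarrow> (\<forall>a. a \<le> f a) \<and> (\<forall>a b. a \<le> b \<longrightarrow> f a \<le> f b) \<and> (\<forall>a. f (f a) = f a)"

definition cl_join :: "('a::order \<Rightarrow> 'a) \<Rightarrow> ('a \<Rightarrow> 'a) \<Rightarrow> ('a \<Rightarrow> 'a)" where
  "cl_join f g = (THE h. closure_op h \<and> f \<le> h \<and> g \<le> h \<and>
      (\<forall>k. closure_op k \<and> f \<le> k \<and> g \<le> k \<longrightarrow> h \<le> k))"

definition cl_meet :: "('a::order \<Rightarrow> 'a) \<Rightarrow> ('a \<Rightarrow> 'a) \<Rightarrow> ('a \<Rightarrow> 'a)" where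
  "cl_meet f g = (THE h. closure_op h \<and> h \<le> f \<and> h \<le> g \<and>
      (\<forall>k. closure_op k \<and> k \<le> f \<and> k \<le> g \<longrightarrow> k \<le> h))"

definition Phi :: "('a \<Rightarrow> 'a) \<Rightarrow> 'a set" where
  "Phi f = {a. f a = a}"

definition cl_modular_pair :: "('a::order \<Rightarrow> 'a) \<Rightarrow> ('a \<Rightarrow> 'a) \<Rightarrow> bool" where
  "cl_modular_pair f g \<longleftrightarrow>
     (\<forall>h. closure_op h \<and> h \<le> g \<longrightarrow> cl_join h (cl_meet f g) = cl_meet (cl_join h f) g)"

end

theory Submission
  imports Defs
begin

text \<open>Closure operators on P correspond to their sets of closed elements, the Moore families
(subsets containing the top and closed under binary meets), and the order of \<open>\<L>\<^sub>P\<close> is reverse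
inclusion of closed sets. If \<open>x\<close> is a minimal non-closed element of \<open>f\<close>, then adding \<open>x\<close> to the
closed sets of \<open>f\<close> gives another closure operator \<open>g\<close>, and \<open>f\<close> forms a modular pair with the
closure operator \<open>c\<^sub>x\<close> whose only closed elements are \<open>x\<close> and the top. Condition (R.2) then reads
\<open>r f = r g + w x\<close> with \<open>w x = r \<top> - r c\<^sub>x \<ge> 0\<close>, where \<open>\<top>\<close> is the constant map to the top.
Adding the non-closed elements one at a time yields \<open>r f = r 0 + \<Sum>x\<notin>\<Phi> f. w x\<close>.\<close>

definition top_elem :: "'a::{finite,lattice}" where
  "top_elem = Sup_fin UNIV"

lemma le_top_elem: "(a::'a::{finite,lattice}) \<le> top_elem"
  unfolding top_elem_def by (rule Sup_fin.coboundedI) auto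

lemma closure_op_top_elem: "closure_op f \<Longrightarrow> f top_elem = top_elem"
  unfolding closure_op_def using le_top_elem by (metis order_antisym)

lemma closure_op_le_iff_Phi:
  assumes f: "closure_op f" and g: "closure_op g"
  shows "f \<le> g \<longleftrightarrow> Phi g \<subseteq> Phi f"
proof
  assume le: "f \<le> g"
  show "Phi g \<subseteq> Phi f"
  proof
    fix a assume "a \<in> Phi g"
    then have "f a \<le> a" using le_funD[OF le, of a] unfolding Phi_def by simp
    then show "a \<in> Phi f" using f unfolding closure_op_def Phi_def by (simp add: order_antisym)
  qed
next
  assume sub: "Phi g \<subseteq> Phi f"
  show "f \<le> g"
  proof (rule le_funI)
    fix a
    have "g a \<in> Phi f" using g sub unfolding closure_op_def Phi_def by auto
    then have "f (g a) = g a" unfolding Phi_def by simp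
    moreover have "f a \<le> f (g a)" using f g unfolding closure_op_def by simp
    ultimately show "f a \<le> g a" by simp
  qed
qed

lemma cl_join_eqI:
  assumes "closure_op h" "f \<le> h" "g \<le> h"
    and "\<And>k. closure_op k \<Longrightarrow> f \<le> k \<Longrightarrow> g \<le> k \<Longrightarrow> h \<le> k"
  shows "cl_join f g = h"
  unfolding cl_join_def by (rule the_equality) (use assms in \<open>blast intro: order_antisym\<close>)+

lemma cl_meet_eqI:
  assumes "closure_op h" "h \<le> f" "h \<le> g"
    and "\<And>k. closure_op k \<Longrightarrow> k \<le> f \<Longrightarrow> k \<le> g \<Longrightarrow> k \<le> h"
  shows "cl_meet f g = h"
  unfolding cl_meet_def by (rule the_equality) (use assms in \<open>blast intro: order_antisym\<close>)+

definition moore_family :: "'a::{finite,lattice} set \<Rightarrow> bool" where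
  "moore_family S \<longleftrightarrow> top_elem \<in> S \<and> (\<forall>a\<in>S. \<forall>b\<in>S. inf a b \<in> S)"

definition moore_closure :: "'a::{finite,lattice} set \<Rightarrow> 'a \<Rightarrow> 'a" where
  "moore_closure S a = Inf_fin {y\<in>S. a \<le> y}"

lemma Inf_fin_mem_inf_closed:
  assumes "finite A" "A \<noteq> {}" "A \<subseteq> S" "\<forall>a\<in>S. \<forall>b\<in>S. inf a b \<in> S"
  shows "Inf_fin A \<in> S"
  using assms by (induction A rule: finite_ne_induct) (simp_all add: Inf_fin.insert)

lemma
  assumes "moore_family (S::'a::{finite,lattice} set)"
  shows moore_closure_mem: "moore_closure S a \<in> S"
    and moore_closure_upper: "a \<le> moore_closure S a"
    and moore_closure_least: "y \<in> S \<Longrightarrow> a \<le> y \<Longrightarrow> moore_closure S a \<le> y"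
proof -
  have ne: "{y\<in>S. a \<le> y} \<noteq> {}"
    using assms le_top_elem unfolding moore_family_def by auto
  show "moore_closure S a \<in> S" unfolding moore_closure_def
    by (rule Inf_fin_mem_inf_closed[OF _ ne]) (use assms in \<open>simp_all add: moore_family_def\<close>)
  show "a \<le> moore_closure S a" unfolding moore_closure_def
    by (rule Inf_fin.boundedI[OF _ ne]) auto
  show "y \<in> S \<Longrightarrow> a \<le> y \<Longrightarrow> moore_closure S a \<le> y" unfolding moore_closure_def
    by (rule Inf_fin.coboundedI) auto
qed

lemma moore_closure_fixed: "moore_family S \<Longrightarrow> y \<in> S \<Longrightarrow> moore_closure S y = y"
  by (simp add: moore_closure_least moore_closure_upper order_antisym)

lemma closure_op_moore_closure:
  assumes "moore_family S"
  shows "closure_op (moore_closure S)"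
  unfolding closure_op_def
proof (intro conjI allI impI)
  fix a b :: 'a assume "a \<le> b"
  also have "b \<le> moore_closure S b" by (rule moore_closure_upper[OF assms])
  finally show "moore_closure S a \<le> moore_closure S b"
    by (rule moore_closure_least[OF assms moore_closure_mem[OF assms]])
qed (simp_all add: assms moore_closure_upper moore_closure_mem moore_closure_fixed)

lemma Phi_moore_closure:
  assumes "moore_family S"
  shows "Phi (moore_closure S) = S"
proof (intro equalityI subsetI)
  fix a assume "a \<in> Phi (moore_closure S)"
  then show "a \<in> S" using moore_closure_mem[OF assms, of a] unfolding Phi_def by simp
qed (simp add: Phi_def moore_closure_fixed[OF assms])

lemma moore_family_Phi:
  assumes f: "closure_op f"
  shows "moore_family (Phi f)"
  unfolding moore_family_def
proof (intro conjI ballI)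
  show "top_elem \<in> Phi f" using closure_op_top_elem[OF f] unfolding Phi_def by simp
  fix a b assume "a \<in> Phi f" "b \<in> Phi f"
  moreover have "f (inf a b) \<le> f a" "f (inf a b) \<le> f b"
    using f unfolding closure_op_def by simp_all
  ultimately have "f (inf a b) \<le> inf a b" unfolding Phi_def by simp
  then show "inf a b \<in> Phi f"
    using f unfolding closure_op_def Phi_def by (auto intro: order_antisym)
qed

lemma moore_family_Int: "moore_family A \<Longrightarrow> moore_family B \<Longrightarrow> moore_family (A \<inter> B)"
  unfolding moore_family_def by auto

lemma moore_family_insert_top: "moore_family {x::'a::{finite,lattice}, top_elem}"
  unfolding moore_family_def using le_top_elem[of x]
  by (auto simp: inf_absorb1 inf_absorb2)

lemma moore_family_insert_minimal:
  assumes S: "moore_family S"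
    and minimal: "\<And>b. b \<notin> S \<Longrightarrow> b \<le> x \<Longrightarrow> b = x"
  shows "moore_family (insert x S)"
proof -
  have "inf a x \<in> insert x S" if "a \<in> S" for a
    using minimal[of "inf a x"] by auto
  then show ?thesis using S unfolding moore_family_def by (auto simp: inf_commute)
qed

lemma cl_join_eq_moore_closure:
  assumes f: "closure_op f" and g: "closure_op g"
  shows "cl_join f g = moore_closure (Phi f \<inter> Phi g)"
proof -
  have M: "moore_family (Phi f \<inter> Phi g)"
    using moore_family_Int moore_family_Phi f g by blast
  show ?thesis
    by (rule cl_join_eqI)
       (use M f g in \<open>simp_all add: closure_op_moore_closure Phi_moore_closure closure_op_le_iff_Phi\<close>)
qed

lemma cl_meet_eq_moore_closure:
  assumes f: "closure_op f" and g: "closure_op g" and M: "moore_family (Phi f \<union> Phi g)"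
  shows "cl_meet f g = moore_closure (Phi f \<union> Phi g)"
  by (rule cl_meet_eqI)
     (use M f g in \<open>simp_all add: closure_op_moore_closure Phi_moore_closure closure_op_le_iff_Phi\<close>)

lemma
  fixes f :: "'a::{finite,lattice} \<Rightarrow> 'a" and x :: 'a
  defines "c \<equiv> moore_closure {x, top_elem}"
  assumes f: "closure_op f" and x: "x \<notin> Phi f"
    and minimal: "\<And>b. b \<notin> Phi f \<Longrightarrow> b \<le> x \<Longrightarrow> b = x"
  shows cl_join_minimal_nonclosed: "cl_join f c = moore_closure {top_elem}"
    and cl_meet_minimal_nonclosed: "cl_meet f c = moore_closure (insert x (Phi f))"
    and cl_modular_pair_minimal_nonclosed: "cl_modular_pair f c"
proof -
  have top_f: "top_elem \<in> Phi f" using moore_family_Phi[OF f] unfolding moore_family_def by blast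
  have G: "moore_family (insert x (Phi f))"
    using moore_family_insert_minimal[OF moore_family_Phi[OF f] minimal] .
  have c: "closure_op c" "Phi c = {x, top_elem}"
    unfolding c_def using closure_op_moore_closure Phi_moore_closure moore_family_insert_top by blast+
  have Phi_union: "Phi f \<union> Phi c = insert x (Phi f)" using c(2) top_f by auto
  show "cl_join f c = moore_closure {top_elem}"
  proof -
    have "Phi f \<inter> Phi c = {top_elem}" using c(2) top_f x by auto
    then show ?thesis using cl_join_eq_moore_closure[OF f c(1)] by simp
  qed
  show meet: "cl_meet f c = moore_closure (insert x (Phi f))"
    using cl_meet_eq_moore_closure[OF f c(1)] Phi_union G by simp
  show "cl_modular_pair f c"
    unfolding cl_modular_pair_def
  proof (intro allI impI, elim conjE)
    fix h assume h: "closure_op h" "h \<le> c"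
    then have "Phi c \<subseteq> Phi h" using c(1) closure_op_le_iff_Phi by blast
    then have Phi_eq: "(Phi h \<inter> Phi f) \<union> Phi c = Phi h \<inter> insert x (Phi f)"
      using c(2) top_f by auto
    have M_hf: "moore_family (Phi h \<inter> Phi f)"
      using moore_family_Int moore_family_Phi h(1) f by blast
    have hf: "closure_op (moore_closure (Phi h \<inter> Phi f))"
      "Phi (moore_closure (Phi h \<inter> Phi f)) = Phi h \<inter> Phi f"
      using M_hf closure_op_moore_closure Phi_moore_closure by blast+
    have M: "moore_family (Phi h \<inter> insert x (Phi f))"
      using moore_family_Int moore_family_Phi h(1) G by blast
    have "cl_join h (cl_meet f c) = moore_closure (Phi h \<inter> insert x (Phi f))"
      using meet cl_join_eq_moore_closure[OF h(1) closure_op_moore_closure[OF G]]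
      by (simp add: Phi_moore_closure[OF G])
    also have "\<dots> = cl_meet (cl_join h f) c"
      using cl_join_eq_moore_closure[OF h(1) f] cl_meet_eq_moore_closure[OF hf(1) c(1)] hf(2) Phi_eq M
      by simp
    finally show "cl_join h (cl_meet f c) = cl_meet (cl_join h f) c" .
  qed
qed

lemma rank_eq_sum_over_nonclosed:
  fixes r :: "('a::{finite, lattice} \<Rightarrow> 'a) \<Rightarrow> real"
  assumes R2: "\<And>f g. closure_op f \<Longrightarrow> closure_op g \<Longrightarrow> cl_modular_pair f g \<Longrightarrow>
               r (cl_join f g) = r f + r g - r (cl_meet f g)"
    and f: "closure_op f"
  shows "r f = r id +
    (\<Sum>x\<in>UNIV - Phi f. r (moore_closure {top_elem}) - r (moore_closure {x, top_elem}))"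
  using f
proof (induction "card (UNIV - Phi f)" arbitrary: f rule: less_induct)
  case less
  let ?w = "\<lambda>x. r (moore_closure {top_elem}) - r (moore_closure {x, top_elem})"
  show ?case
  proof (cases "UNIV - Phi f = {}")
    case True
    then have "f = id" unfolding Phi_def by (auto intro!: ext)
    with True show ?thesis by (simp only: sum.empty)
  next
    case False
    then obtain x where x: "x \<in> UNIV - Phi f"
      and minimal: "\<And>b. b \<notin> Phi f \<Longrightarrow> b \<le> x \<Longrightarrow> b = x"
      using finite_has_minimal[OF finite False] by blast
    define g where "g = moore_closure (insert x (Phi f))"
    have G: "moore_family (insert x (Phi f))"
      using moore_family_insert_minimal[OF moore_family_Phi[OF less.prems] minimal] .
    have g: "closure_op g" "UNIV - Phi g = (UNIV - Phi f) - {x}"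
      unfolding g_def using closure_op_moore_closure[OF G] Phi_moore_closure[OF G] by auto
    have "r g = r id + (\<Sum>y\<in>(UNIV - Phi f) - {x}. ?w y)"
      using less.hyps[OF _ g(1)] g(2) card_Diff1_less[OF finite x] by simp
    moreover have "r f = r g + ?w x"
    proof -
      let ?c = "moore_closure {x, top_elem}"
      have "closure_op ?c" using closure_op_moore_closure[OF moore_family_insert_top] .
      from R2[OF less.prems this cl_modular_pair_minimal_nonclosed[OF less.prems _ minimal]]
      show ?thesis
        using x cl_join_minimal_nonclosed[OF less.prems _ minimal]
          cl_meet_minimal_nonclosed[OF less.prems _ minimal]
        unfolding g_def by simp
    qed
    ultimately show ?thesis
      using sum.remove[OF finite x, of ?w] by simp
  qed
qed

theorem mainTheorem16:
  fixes r :: "('a::{finite, lattice} \<Rightarrow> 'a) \<Rightarrow> real"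
  assumes nonneg: "\<And>f. closure_op f \<Longrightarrow> r f \<ge> 0"
    and R1: "\<And>f g. closure_op f \<Longrightarrow> closure_op g \<Longrightarrow> f \<le> g \<Longrightarrow> r f \<le> r g"
    and R2: "\<And>f g. closure_op f \<Longrightarrow> closure_op g \<Longrightarrow> cl_modular_pair f g \<Longrightarrow>
               r (cl_join f g) = r f + r g - r (cl_meet f g)"
  shows "\<exists>\<mu> :: 'a set \<Rightarrow> real.
           (\<forall>S. \<mu> S \<ge> 0) \<and>
           (\<forall>S T. S \<inter> T = {} \<longrightarrow> \<mu> (S \<union> T) = \<mu> S + \<mu> T) \<and>
           (\<forall>f. closure_op f \<longrightarrow> r f = \<mu> (UNIV - Phi f) + r id)"
proof -
  define w where "w x = r (moore_closure {top_elem}) - r (moore_closure {x, top_elem})" for x :: 'a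
  have w_nonneg: "w x \<ge> 0" for x
  proof -
    have M: "moore_family {top_elem::'a}" unfolding moore_family_def by simp
    note closed = closure_op_moore_closure[OF M] closure_op_moore_closure[OF moore_family_insert_top]
    have "moore_closure {x, top_elem} \<le> moore_closure {top_elem}"
      by (simp add: closure_op_le_iff_Phi[OF closed(2,1)] Phi_moore_closure[OF M]
          Phi_moore_closure[OF moore_family_insert_top])
    then have "r (moore_closure {x, top_elem}) \<le> r (moore_closure {top_elem})"
      by (rule R1[OF closed(2,1)])
    then show ?thesis unfolding w_def by linarith
  qed
  show ?thesis
  proof (intro exI[of _ "\<lambda>S. \<Sum>x\<in>S. w x"] conjI allI impI)
    show "0 \<le> (\<Sum>x\<in>S. w x)" for S using w_nonneg by (simp add: sum_nonneg)
    show "(\<Sum>x\<in>S \<union> T. w x) = (\<Sum>x\<in>S. w x) + (\<Sum>x\<in>T. w x)" if "S \<inter> T = {}" for S T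
      using that by (simp add: sum.union_disjoint)
    show "r f = (\<Sum>x\<in>UNIV - Phi f. w x) + r id" if "closure_op f" for f
    proof -
      have "r f = r id + (\<Sum>x\<in>UNIV - Phi f. w x)"
        unfolding w_def by (rule rank_eq_sum_over_nonclosed[OF R2 that])
      then show ?thesis by linarith
    qed
  qed
qed

end
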